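(* Let $A,B$ be idempotent $\Gamma$-graded rings and ${}_AP_B$, ${}_BQ_A$ graded bimodules unital on both sides, such that there is a graded Morita context $(A,B,P,Q,\mu,\nu)$ with surjective trace maps. For every unital graded left $A$-module $U$, the map $\eta:B\cdot\mathrm{HOM}_A(P,A)\otimes_AU\to B\cdot\mathrm{HOM}_A(P,U)$ given by $\eta(g\otimes u)(p)=g(p)u$ is a graded epimorphism of degree $e$ of graded left $B$-modules whose kernel is torsion (i.e. annihilated elementwise by $B$).
   Context: $\Gamma$ is a fixed multiplicative group with identity $e$. Rings are associative $\Gamma$-graded, not necessarily unital; $A$ is idempotent if $A^2=A$; a module is unital if $AM=M$. A left-linear $f$ is graded of degree $\sigma$ if $f(M_\tau)\subseteq N_{\tau\sigma}$; $\mathrm{HOM}$ is the direct sum over degrees. $\mathrm{HOM}_A(P,N)$ is a graded left $B$-module via $(bf)(p)=f(pb)$, and $\mathrm{HOM}_A(P,A)$ is also a right $A$-module via $(fa)(p)=f(p)a$; $B\cdot H$ denotes finite sums $\sum b_ih_i$. A graded Morita context $(A,B,P,Q,\mu,\nu)$: idempotent graded rings $A,B$, graded bimodules ${}_AP_B$, ${}_BQ_A$ unital on both sides, degree-$e$ graded bimodule maps $\mu:P\otimes_BQ\to A$, $\langle p,q\rangle=\mu(p\otimes q)$, $\nu:Q\otimes_AP\to B$, $[q,p]=\nu(q\otimes p)$, with $p'[q,p]=\langle p',q\rangle p$ and $q'\langle p,q\rangle=[q',p]q$. *)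

theory Defs
  imports "HOL-Algebra.Group" "HOL-Library.Poly_Mapping"
begin

text \<open>
The grading group Gamma is a HOL-Algebra group G (multiplicative,
identity one G). Rings are (not necessarily unital) rings, modelled by the type
class ring (which has no unit).  Abelian groups underlying modules are types of
class ab_group_add; module actions are explicit functions.
\<close>

definition add_subgroup :: "'x::ab_group_add set \<Rightarrow> bool" where
  "add_subgroup S \<longleftrightarrow> 0 \<in> S \<and> (\<forall>x\<in>S. \<forall>y\<in>S. x + y \<in> S \<and> - x \<in> S)"

definition graded_group :: "('g, 'z) monoid_scheme \<Rightarrow> ('g \<Rightarrow> 'x::ab_group_add set) \<Rightarrow> bool" where
  "graded_group G XG \<longleftrightarrow>
     (\<forall>\<sigma>\<in>carrier G. add_subgroup (XG \<sigma>)) \<and>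
     (\<forall>x. \<exists>!c. (\<forall>\<sigma>. \<sigma> \<notin> carrier G \<longrightarrow> c \<sigma> = 0) \<and> (\<forall>\<sigma>\<in>carrier G. c \<sigma> \<in> XG \<sigma>) \<and>
              finite {\<sigma>. c \<sigma> \<noteq> 0} \<and> x = (\<Sum>\<sigma>\<in>{\<sigma>. c \<sigma> \<noteq> 0}. c \<sigma>))"

definition graded_ring :: "('g, 'z) monoid_scheme \<Rightarrow> ('g \<Rightarrow> 'a::ring set) \<Rightarrow> bool" where
  "graded_ring G AG \<longleftrightarrow> graded_group G AG \<and>
     (\<forall>\<sigma>\<in>carrier G. \<forall>\<tau>\<in>carrier G. \<forall>a\<in>AG \<sigma>. \<forall>a'\<in>AG \<tau>. a * a' \<in> AG (\<sigma> \<otimes>\<^bsub>G\<^esub> \<tau>))"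

definition idempotent_ring :: "'a::ring itself \<Rightarrow> bool" where
  "idempotent_ring _ \<longleftrightarrow> (\<forall>a::'a. \<exists>xs::('a \<times> 'a) list. a = sum_list (map (\<lambda>(x, y). x * y) xs))"

definition lmod :: "('r::ring \<Rightarrow> 'm::ab_group_add \<Rightarrow> 'm) \<Rightarrow> bool" where
  "lmod act \<longleftrightarrow> (\<forall>r m m'. act r (m + m') = act r m + act r m') \<and>
                 (\<forall>r r' m. act (r + r') m = act r m + act r' m) \<and>
                 (\<forall>r r' m. act (r * r') m = act r (act r' m))"

definition rmod :: "('m::ab_group_add \<Rightarrow> 'r::ring \<Rightarrow> 'm) \<Rightarrow> bool" where
  "rmod act \<longleftrightarrow> (\<forall>r m m'. act (m + m') r = act m r + act m' r) \<and>
                 (\<forall>r r' m. act m (r + r') = act m r + act m r') \<and>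
                 (\<forall>r r' m. act m (r * r') = act (act m r) r')"

definition lunital :: "('r::ring \<Rightarrow> 'm::ab_group_add \<Rightarrow> 'm) \<Rightarrow> bool" where
  "lunital act \<longleftrightarrow> (\<forall>m. \<exists>xs::('r \<times> 'm) list. m = sum_list (map (\<lambda>(r, n). act r n) xs))"

definition runital :: "('m::ab_group_add \<Rightarrow> 'r::ring \<Rightarrow> 'm) \<Rightarrow> bool" where
  "runital act \<longleftrightarrow> (\<forall>m. \<exists>xs::('m \<times> 'r) list. m = sum_list (map (\<lambda>(n, r). act n r) xs))"

definition graded_lmod ::
  "('g, 'z) monoid_scheme \<Rightarrow> ('g \<Rightarrow> 'r::ring set) \<Rightarrow> ('g \<Rightarrow> 'm::ab_group_add set) \<Rightarrow> ('r \<Rightarrow> 'm \<Rightarrow> 'm) \<Rightarrow> bool" where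
  "graded_lmod G RG MG act \<longleftrightarrow> lmod act \<and> graded_group G MG \<and>
     (\<forall>\<sigma>\<in>carrier G. \<forall>\<tau>\<in>carrier G. \<forall>r\<in>RG \<sigma>. \<forall>m\<in>MG \<tau>. act r m \<in> MG (\<sigma> \<otimes>\<^bsub>G\<^esub> \<tau>))"

definition graded_rmod ::
  "('g, 'z) monoid_scheme \<Rightarrow> ('g \<Rightarrow> 'm::ab_group_add set) \<Rightarrow> ('g \<Rightarrow> 'r::ring set) \<Rightarrow> ('m \<Rightarrow> 'r \<Rightarrow> 'm) \<Rightarrow> bool" where
  "graded_rmod G MG RG act \<longleftrightarrow> rmod act \<and> graded_group G MG \<and>
     (\<forall>\<sigma>\<in>carrier G. \<forall>\<tau>\<in>carrier G. \<forall>m\<in>MG \<tau>. \<forall>r\<in>RG \<sigma>. act m r \<in> MG (\<tau> \<otimes>\<^bsub>G\<^esub> \<sigma>))"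

definition graded_unital_bimod ::
  "('g, 'z) monoid_scheme \<Rightarrow> ('g \<Rightarrow> 'r::ring set) \<Rightarrow> ('g \<Rightarrow> 's::ring set) \<Rightarrow> ('g \<Rightarrow> 'm::ab_group_add set)
   \<Rightarrow> ('r \<Rightarrow> 'm \<Rightarrow> 'm) \<Rightarrow> ('m \<Rightarrow> 's \<Rightarrow> 'm) \<Rightarrow> bool" where
  "graded_unital_bimod G RG SG MG la ra \<longleftrightarrow>
     graded_lmod G RG MG la \<and> graded_rmod G MG SG ra \<and> lunital la \<and> runital ra \<and>
     (\<forall>r m s. ra (la r m) s = la r (ra m s))"

text \<open>A degree-e graded bimodule map P (x)_S Q \<rightarrow> R, written via its (universal)
  S-balanced biadditive description p, q \<mapsto> <p,q>.\<close>
definition graded_pairing ::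
  "('g, 'z) monoid_scheme \<Rightarrow> ('g \<Rightarrow> 'r::ring set) \<Rightarrow> ('g \<Rightarrow> 'p::ab_group_add set) \<Rightarrow> ('g \<Rightarrow> 'q::ab_group_add set)
   \<Rightarrow> ('r \<Rightarrow> 'p \<Rightarrow> 'p) \<Rightarrow> ('p \<Rightarrow> 's::ring \<Rightarrow> 'p) \<Rightarrow> ('s \<Rightarrow> 'q \<Rightarrow> 'q) \<Rightarrow> ('q \<Rightarrow> 'r \<Rightarrow> 'q)
   \<Rightarrow> ('p \<Rightarrow> 'q \<Rightarrow> 'r) \<Rightarrow> bool" where
  "graded_pairing G RG PG QG laP raP laQ raQ m \<longleftrightarrow>
     (\<forall>p p' q. m (p + p') q = m p q + m p' q) \<and>
     (\<forall>p q q'. m p (q + q') = m p q + m p q') \<and>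
     (\<forall>p s q. m (raP p s) q = m p (laQ s q)) \<and>
     (\<forall>r p q. m (laP r p) q = r * m p q) \<and>
     (\<forall>p q r. m p (raQ q r) = m p q * r) \<and>
     (\<forall>\<sigma>\<in>carrier G. \<forall>\<tau>\<in>carrier G. \<forall>p\<in>PG \<sigma>. \<forall>q\<in>QG \<tau>. m p q \<in> RG (\<sigma> \<otimes>\<^bsub>G\<^esub> \<tau>))"

definition pairing_surj :: "('p \<Rightarrow> 'q \<Rightarrow> 'r::ring) \<Rightarrow> bool" where
  "pairing_surj m \<longleftrightarrow> (\<forall>r. \<exists>xs. r = sum_list (map (\<lambda>(p, q). m p q) xs))"

definition graded_morita_context ::
  "('g, 'z) monoid_scheme \<Rightarrow> ('g \<Rightarrow> 'a::ring set) \<Rightarrow> ('g \<Rightarrow> 'b::ring set)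
   \<Rightarrow> ('g \<Rightarrow> 'p::ab_group_add set) \<Rightarrow> ('a \<Rightarrow> 'p \<Rightarrow> 'p) \<Rightarrow> ('p \<Rightarrow> 'b \<Rightarrow> 'p)
   \<Rightarrow> ('g \<Rightarrow> 'q::ab_group_add set) \<Rightarrow> ('b \<Rightarrow> 'q \<Rightarrow> 'q) \<Rightarrow> ('q \<Rightarrow> 'a \<Rightarrow> 'q)
   \<Rightarrow> ('p \<Rightarrow> 'q \<Rightarrow> 'a) \<Rightarrow> ('q \<Rightarrow> 'p \<Rightarrow> 'b) \<Rightarrow> bool" where
  "graded_morita_context G AG BG PG laP raP QG laQ raQ mu nu \<longleftrightarrow>
     graded_ring G AG \<and> graded_ring G BG \<and>
     idempotent_ring TYPE('a) \<and> idempotent_ring TYPE('b) \<and>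
     graded_unital_bimod G AG BG PG laP raP \<and>
     graded_unital_bimod G BG AG QG laQ raQ \<and>
     graded_pairing G AG PG QG laP raP laQ raQ mu \<and>
     graded_pairing G BG QG PG laQ raQ laP raP nu \<and>
     (\<forall>p' q p. raP p' (nu q p) = laP (mu p' q) p) \<and>
     (\<forall>q' p q. raQ q' (mu p q) = laQ (nu q' p) q)"

definition hom_deg ::
  "('g, 'z) monoid_scheme \<Rightarrow> ('a \<Rightarrow> 'm::ab_group_add \<Rightarrow> 'm) \<Rightarrow> ('g \<Rightarrow> 'm set)
   \<Rightarrow> ('a \<Rightarrow> 'n::ab_group_add \<Rightarrow> 'n) \<Rightarrow> ('g \<Rightarrow> 'n set) \<Rightarrow> 'g \<Rightarrow> ('m \<Rightarrow> 'n) \<Rightarrow> bool" where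
  "hom_deg G laM MG laN NG \<sigma> f \<longleftrightarrow> \<sigma> \<in> carrier G \<and>
     (\<forall>x y. f (x + y) = f x + f y) \<and> (\<forall>a x. f (laM a x) = laN a (f x)) \<and>
     (\<forall>\<tau>\<in>carrier G. \<forall>x\<in>MG \<tau>. f x \<in> NG (\<tau> \<otimes>\<^bsub>G\<^esub> \<sigma>))"

definition HOM ::
  "('g, 'z) monoid_scheme \<Rightarrow> ('a \<Rightarrow> 'm::ab_group_add \<Rightarrow> 'm) \<Rightarrow> ('g \<Rightarrow> 'm set)
   \<Rightarrow> ('a \<Rightarrow> 'n::ab_group_add \<Rightarrow> 'n) \<Rightarrow> ('g \<Rightarrow> 'n set) \<Rightarrow> ('m \<Rightarrow> 'n) set" where
  "HOM G laM MG laN NG = {f. \<exists>S h. finite S \<and> S \<subseteq> carrier G \<and>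
      (\<forall>\<sigma>\<in>S. hom_deg G laM MG laN NG \<sigma> (h \<sigma>)) \<and> f = (\<lambda>x. \<Sum>\<sigma>\<in>S. h \<sigma> x)}"

definition Bdot :: "('p \<Rightarrow> 'b \<Rightarrow> 'p) \<Rightarrow> ('p \<Rightarrow> 'n::ab_group_add) set \<Rightarrow> ('p \<Rightarrow> 'n) set" where
  "Bdot raP H = {f. \<exists>xs::('b \<times> ('p \<Rightarrow> 'n)) list. set (map snd xs) \<subseteq> H \<and>
                     f = (\<lambda>p. \<Sum>(b, h)\<leftarrow>xs. h (raP p b))}"

definition zmult :: "int \<Rightarrow> 'u::ab_group_add \<Rightarrow> 'u" where
  "zmult n u = (if 0 \<le> n then (\<Sum>i<nat n. u) else - (\<Sum>i<nat (- n). u))"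

text \<open>Tensor product M (x)_A U, for M a set of functions P \<rightarrow> A closed under the
  right A-action (f a)(p) = f(p) a, realised literally as the free abelian group
  on M \<times> U modulo the subgroup generated by the bilinearity/balancing relations.\<close>
inductive_set tensor_rel ::
  "('p \<Rightarrow> 'a::ring) set \<Rightarrow> ('a \<Rightarrow> 'u::ab_group_add \<Rightarrow> 'u) \<Rightarrow> ((('p \<Rightarrow> 'a) \<times> 'u) \<Rightarrow>\<^sub>0 int) set"
  for M laU where
  zero: "0 \<in> tensor_rel M laU"
| add: "x \<in> tensor_rel M laU \<Longrightarrow> y \<in> tensor_rel M laU \<Longrightarrow> x + y \<in> tensor_rel M laU"
| neg: "x \<in> tensor_rel M laU \<Longrightarrow> - x \<in> tensor_rel M laU"
| addl: "g \<in> M \<Longrightarrow> g' \<in> M \<Longrightarrow>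
     Poly_Mapping.single (\<lambda>p. g p + g' p, u) 1 - Poly_Mapping.single (g, u) 1
       - Poly_Mapping.single (g', u) 1 \<in> tensor_rel M laU"
| addr: "g \<in> M \<Longrightarrow>
     Poly_Mapping.single (g, u + u') 1 - Poly_Mapping.single (g, u) 1
       - Poly_Mapping.single (g, u') 1 \<in> tensor_rel M laU"
| bal: "g \<in> M \<Longrightarrow>
     Poly_Mapping.single (\<lambda>p. g p * a, u) 1 - Poly_Mapping.single (g, laU a u) 1 \<in> tensor_rel M laU"

text \<open>Formal sums supported on M \<times> U (representatives of elements of M (x)_A U).\<close>
definition tensor_free :: "('p \<Rightarrow> 'a) set \<Rightarrow> ((('p \<Rightarrow> 'a) \<times> 'u) \<Rightarrow>\<^sub>0 int) set" where
  "tensor_free M = {x. Poly_Mapping.keys x \<subseteq> M \<times> UNIV}"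

definition tensor_Bact ::
  "('p \<Rightarrow> 'b \<Rightarrow> 'p) \<Rightarrow> 'b \<Rightarrow> ((('p \<Rightarrow> 'a) \<times> 'u) \<Rightarrow>\<^sub>0 int) \<Rightarrow> ((('p \<Rightarrow> 'a) \<times> 'u) \<Rightarrow>\<^sub>0 int)" where
  "tensor_Bact raP b x = (\<Sum>k\<in>Poly_Mapping.keys x. Poly_Mapping.single (\<lambda>p. fst k (raP p b), snd k) (Poly_Mapping.lookup x k))"

definition eta ::
  "('a \<Rightarrow> 'u::ab_group_add \<Rightarrow> 'u) \<Rightarrow> ((('p \<Rightarrow> 'a) \<times> 'u) \<Rightarrow>\<^sub>0 int) \<Rightarrow> ('p \<Rightarrow> 'u)" where
  "eta laU x = (\<lambda>p. \<Sum>k\<in>Poly_Mapping.keys x. zmult (Poly_Mapping.lookup x k) (laU (fst k p) (snd k)))"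

end

(* The map eta is additive on formal sums and kills the bilinearity and balancing relations,
   and it intertwines the B-actions on generators, so it is a B-linear map on the tensor product.
   Every b in B is a sum of brackets [q,p'], and p[q,p'] = <p,q>p'; hence for h in HOM_A(P,U)
   the map p |-> h(p[q,p']) = <p,q> h(p') is eta(<-,q> (x) h(p')), which gives surjectivity onto
   B HOM_A(P,U).  The same identity read on generators says [q,p'] x = <-,q> (x) eta(x)(p')
   modulo the relations, so [q,p'] x is a relation whenever eta(x) = 0; additivity in b then
   shows that B annihilates the kernel. *)

theory Submission
  imports Defs HOL.Modules "HOL-Library.Function_Algebras"
begin

lemma zmult_0 [simp]: "zmult 0 u = 0"
  by (simp add: zmult_def)

lemma zmult_1 [simp]: "zmult 1 u = u"
  by (simp add: zmult_def)

lemma zmult_plus1: "zmult (n + 1) u = zmult n u + u"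
proof (cases "0 \<le> n")
  case True
  then have "nat (n + 1) = Suc (nat n)" by simp
  with True show ?thesis by (simp add: zmult_def add.commute)
next
  case False
  then have "nat (- n) = Suc (nat (- (n + 1)))" by simp
  moreover have "zmult (n + 1) u = - (\<Sum>i<nat (- (n + 1)). u)"
    using False by (simp add: zmult_def)
  ultimately show ?thesis using False by (simp add: zmult_def)
qed

lemma zmult_add: "zmult (m + n) u = zmult m u + zmult n u"
proof (induction n rule: int_induct[where k = 0])
  case (step1 n)
  then show ?case by (metis add.assoc zmult_plus1)
next
  case (step2 n)
  have "zmult (m + (n - 1)) u = zmult (m + n) u - u"
    using zmult_plus1[of "m + (n - 1)" u] by (simp add: eq_diff_eq)
  moreover have "zmult (n - 1) u = zmult n u - u"
    using zmult_plus1[of "n - 1" u] by (simp add: eq_diff_eq)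
  ultimately show ?case
    using step2 by simp
qed simp

lemma additive_zmult: "additive (\<lambda>n. zmult n u)"
  by unfold_locales (rule zmult_add)

lemma fun_sum_apply: "(\<Sum>i\<in>I. f i) x = (\<Sum>i\<in>I. f i x)"
  by (induction I rule: infinite_finite_induct) simp_all

lemma fun_sum_list_apply: "(\<Sum>x\<leftarrow>xs. f x) p = (\<Sum>x\<leftarrow>xs. f x p)"
  by (induction xs) simp_all

lemma sum_list_map_induct:
  assumes "P 0" and "\<And>x. x \<in> set xs \<Longrightarrow> P (f x)" and "\<And>a b. P a \<Longrightarrow> P b \<Longrightarrow> P (a + b)"
  shows "P (\<Sum>x\<leftarrow>xs. f x)"
  using assms(2) by (induction xs) (simp_all add: assms(1,3))

lemma pairing_surj_induct [consumes 1, case_names zero pair add]: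
  assumes "pairing_surj m" and "P 0" and "\<And>p q. P (m p q)"
    and "\<And>a b. P a \<Longrightarrow> P b \<Longrightarrow> P (a + b)"
  shows "P r"
proof -
  obtain xs where "r = (\<Sum>(p, q)\<leftarrow>xs. m p q)"
    using assms(1) unfolding pairing_surj_def by blast
  then show ?thesis
    by (simp only:) (rule sum_list_map_induct; use assms in \<open>auto split: prod.split\<close>)
qed

lemma lunital_induct [consumes 1, case_names zero act add]:
  assumes "lunital act" and "P 0" and "\<And>r m. P (act r m)"
    and "\<And>a b. P a \<Longrightarrow> P b \<Longrightarrow> P (a + b)"
  shows "P m"
proof -
  obtain xs where "m = (\<Sum>(r, n)\<leftarrow>xs. act r n)"
    using assms(1) unfolding lunital_def by blast
  then show ?thesis
    by (simp only:) (rule sum_list_map_induct; use assms in \<open>auto split: prod.split\<close>)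
qed

lemma sum_keys_lookup_superset:
  assumes "\<And>k. F k 0 = 0" and "finite S" and "Poly_Mapping.keys x \<subseteq> S"
  shows "(\<Sum>k\<in>Poly_Mapping.keys x. F k (Poly_Mapping.lookup x k))
       = (\<Sum>k\<in>S. F k (Poly_Mapping.lookup x k))"
  by (rule sum.mono_neutral_left) (use assms in \<open>auto simp: in_keys_iff\<close>)

lemma sum_keys_lookup_add:
  fixes F :: "'k \<Rightarrow> int \<Rightarrow> 'v::ab_group_add"
  assumes "\<And>k. additive (F k)"
  shows "(\<Sum>k\<in>Poly_Mapping.keys (x + y). F k (Poly_Mapping.lookup (x + y) k))
       = (\<Sum>k\<in>Poly_Mapping.keys x. F k (Poly_Mapping.lookup x k))
       + (\<Sum>k\<in>Poly_Mapping.keys y. F k (Poly_Mapping.lookup y k))"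
proof -
  let ?S = "Poly_Mapping.keys x \<union> Poly_Mapping.keys y"
  have zero: "F k 0 = 0" for k
    using assms additive.zero by blast
  have "(\<Sum>k\<in>Poly_Mapping.keys (x + y). F k (Poly_Mapping.lookup (x + y) k))
      = (\<Sum>k\<in>?S. F k (Poly_Mapping.lookup (x + y) k))"
    by (rule sum_keys_lookup_superset[of F, OF zero]) (simp_all add: keys_add)
  also have "\<dots> = (\<Sum>k\<in>?S. F k (Poly_Mapping.lookup x k)) + (\<Sum>k\<in>?S. F k (Poly_Mapping.lookup y k))"
    by (simp add: lookup_add additive.add[OF assms] sum.distrib)
  also have "\<dots> = (\<Sum>k\<in>Poly_Mapping.keys x. F k (Poly_Mapping.lookup x k))
      + (\<Sum>k\<in>Poly_Mapping.keys y. F k (Poly_Mapping.lookup y k))"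
    by (simp add: sum_keys_lookup_superset[of F ?S, OF zero])
  finally show ?thesis .
qed

lemma add_subgroup_zero: "add_subgroup S \<Longrightarrow> 0 \<in> S"
  by (simp add: add_subgroup_def)

lemma add_subgroup_add: "add_subgroup S \<Longrightarrow> x \<in> S \<Longrightarrow> y \<in> S \<Longrightarrow> x + y \<in> S"
  by (simp add: add_subgroup_def)

lemma add_subgroup_neg: "add_subgroup S \<Longrightarrow> x \<in> S \<Longrightarrow> - x \<in> S"
  by (simp add: add_subgroup_def)

lemma add_subgroup_diff: "add_subgroup S \<Longrightarrow> x \<in> S \<Longrightarrow> y \<in> S \<Longrightarrow> x - y \<in> S"
  unfolding add_subgroup_def by (metis diff_conv_add_uminus)

lemma add_subgroup_sum: "add_subgroup S \<Longrightarrow> (\<And>i. i \<in> I \<Longrightarrow> f i \<in> S) \<Longrightarrow> sum f I \<in> S"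
  by (induction I rule: infinite_finite_induct) (simp_all add: add_subgroup_def)

lemma add_subgroup_image:
  assumes "additive f" and "add_subgroup S"
  shows "add_subgroup (f ` S)"
proof -
  interpret additive f by fact
  have "f x + f y \<in> f ` S" if "x \<in> S" "y \<in> S" for x y
    using that assms(2) by (intro rev_image_eqI[of "x + y"]) (simp_all add: add add_subgroup_def)
  moreover have "- f x \<in> f ` S" if "x \<in> S" for x
    using that assms(2) by (intro rev_image_eqI[of "- x"]) (simp_all add: minus add_subgroup_def)
  moreover have "0 \<in> f ` S"
    using assms(2) by (intro rev_image_eqI[of 0]) (simp_all add: zero add_subgroup_def)
  ultimately show ?thesis
    by (auto simp: add_subgroup_def)
qed

lemma add_subgroup_vimage: "additive f \<Longrightarrow> add_subgroup S \<Longrightarrow> add_subgroup (f -` S)"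
  by (simp add: add_subgroup_def additive.add additive.minus additive.zero)

lemma frag_induction_add_subgroup:
  assumes "Poly_Mapping.keys x \<subseteq> K" and "add_subgroup S"
    and "\<And>k. k \<in> K \<Longrightarrow> frag_of k \<in> S"
  shows "x \<in> S"
  using assms(1)
  by (induction x rule: frag_induction)
    (use assms(2,3) in \<open>auto simp: add_subgroup_def add_subgroup_diff\<close>)

lemma lmod_additive_left: "lmod act \<Longrightarrow> additive (\<lambda>r. act r m)"
  by unfold_locales (simp add: lmod_def)

lemma lmod_additive_right: "lmod act \<Longrightarrow> additive (act r)"
  by unfold_locales (simp add: lmod_def)

lemma lmod_times: "lmod ((*) :: 'a::ring \<Rightarrow> 'a \<Rightarrow> 'a)"
  by (simp add: lmod_def algebra_simps)

lemma graded_group_decomposition: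
  assumes "graded_group G XG"
  obtains T c where "finite T" "T \<subseteq> carrier G" "\<And>\<tau>. \<tau> \<in> T \<Longrightarrow> c \<tau> \<in> XG \<tau>" "x = sum c T"
proof -
  obtain c where "\<forall>\<sigma>\<in>carrier G. c \<sigma> \<in> XG \<sigma>" "\<forall>\<sigma>. \<sigma> \<notin> carrier G \<longrightarrow> c \<sigma> = 0"
      "finite {\<sigma>. c \<sigma> \<noteq> 0}" "x = sum c {\<sigma>. c \<sigma> \<noteq> 0}"
    using assms unfolding graded_group_def by metis
  then show ?thesis
    by (intro that[of "{\<sigma>. c \<sigma> \<noteq> 0}" c]) auto
qed

section \<open>Graded homomorphisms\<close>

lemma hom_deg_additive: "hom_deg G laM MG laN NG \<sigma> f \<Longrightarrow> additive f"
  by unfold_locales (simp add: hom_deg_def)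

lemma add_subgroup_hom_deg:
  assumes "group G" and "graded_group G NG" and "lmod laN" and "\<sigma> \<in> carrier G"
  shows "add_subgroup {f. hom_deg G laM MG laN NG \<sigma> f}"
proof -
  have NG: "add_subgroup (NG (\<tau> \<otimes>\<^bsub>G\<^esub> \<sigma>))" if "\<tau> \<in> carrier G" for \<tau>
    using assms(1,2,4) that by (simp add: graded_group_def group.is_monoid monoid.m_closed)
  have laN: "additive (laN a)" for a
    by (rule lmod_additive_right[OF assms(3)])
  have "hom_deg G laM MG laN NG \<sigma> 0"
    using assms(4) by (auto simp: hom_deg_def additive.zero[OF laN] intro: add_subgroup_zero NG)
  moreover have "hom_deg G laM MG laN NG \<sigma> (f + g)"
    if "hom_deg G laM MG laN NG \<sigma> f" and "hom_deg G laM MG laN NG \<sigma> g" for f g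
    using that
    by (auto simp: hom_deg_def additive.add[OF laN] algebra_simps intro: add_subgroup_add NG)
  moreover have "hom_deg G laM MG laN NG \<sigma> (- f)" if "hom_deg G laM MG laN NG \<sigma> f" for f
    using that by (auto simp: hom_deg_def additive.minus[OF laN] intro: add_subgroup_neg NG)
  ultimately show ?thesis
    by (simp add: add_subgroup_def)
qed

lemma HOM_iff:
  "f \<in> HOM G laM MG laN NG \<longleftrightarrow> (\<exists>S h. finite S \<and> S \<subseteq> carrier G \<and>
     (\<forall>\<sigma>\<in>S. hom_deg G laM MG laN NG \<sigma> (h \<sigma>)) \<and> f = sum h S)"
  by (simp add: HOM_def fun_sum_apply[symmetric])

lemma hom_deg_in_HOM: "hom_deg G laM MG laN NG \<sigma> f \<Longrightarrow> f \<in> HOM G laM MG laN NG"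
  unfolding HOM_iff by (intro exI[of _ "{\<sigma>}"] exI[of _ "\<lambda>_. f"]) (simp add: hom_deg_def)

lemma sum_hom_deg_in_HOM:
  assumes "group G" and "graded_group G NG" and "lmod laN" and "finite I"
    and "\<And>i. i \<in> I \<Longrightarrow> hom_deg G laM MG laN NG (d i) (F i)"
  shows "sum F I \<in> HOM G laM MG laN NG"
proof -
  define h where "h \<sigma> = sum F {i \<in> I. d i = \<sigma>}" for \<sigma>
  have "d ` I \<subseteq> carrier G"
    using assms(5) by (auto simp: hom_deg_def)
  moreover have "hom_deg G laM MG laN NG \<sigma> (h \<sigma>)" if "\<sigma> \<in> d ` I" for \<sigma>
  proof -
    have "\<sigma> \<in> carrier G"
      using that \<open>d ` I \<subseteq> carrier G\<close> by blast
    have "sum F {i \<in> I. d i = \<sigma>} \<in> {f. hom_deg G laM MG laN NG \<sigma> f}"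
      by (rule add_subgroup_sum[OF add_subgroup_hom_deg[OF assms(1-3) \<open>\<sigma> \<in> carrier G\<close>]])
        (use assms(5) in auto)
    then show ?thesis
      by (simp add: h_def)
  qed
  moreover have "sum F I = sum h (d ` I)"
    unfolding h_def by (rule sum.image_gen[OF assms(4)])
  ultimately show ?thesis
    unfolding HOM_iff using assms(4) by (intro exI[of _ "d ` I"] exI[of _ h]) simp
qed

lemma add_subgroup_HOM:
  assumes "group G" and "graded_group G NG" and "lmod laN"
  shows "add_subgroup (HOM G laM MG laN NG)"
  unfolding add_subgroup_def
proof (intro conjI ballI)
  show "0 \<in> HOM G laM MG laN NG"
    using sum_hom_deg_in_HOM[OF assms, of "{}"] by simp
  fix f g
  assume "f \<in> HOM G laM MG laN NG" "g \<in> HOM G laM MG laN NG"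
  then obtain S h S' h' where S: "finite S" "\<forall>\<sigma>\<in>S. hom_deg G laM MG laN NG \<sigma> (h \<sigma>)" "f = sum h S"
    and S': "finite S'" "\<forall>\<sigma>\<in>S'. hom_deg G laM MG laN NG \<sigma> (h' \<sigma>)" "g = sum h' S'"
    unfolding HOM_iff by blast
  have "f + g = sum (case_sum h h') (S <+> S')"
    using S S' by (simp add: sum.Plus o_def)
  also have "\<dots> \<in> HOM G laM MG laN NG"
    using S S' by (intro sum_hom_deg_in_HOM[OF assms, where d = "case_sum id id"]) auto
  finally show "f + g \<in> HOM G laM MG laN NG" .
  have "- f = sum (\<lambda>\<sigma>. - h \<sigma>) S"
    using S by (simp add: sum_negf)
  also have "\<dots> \<in> HOM G laM MG laN NG"
  proof (intro sum_hom_deg_in_HOM[OF assms, where d = id])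
    fix \<sigma>
    assume "\<sigma> \<in> S"
    with S(2) have "hom_deg G laM MG laN NG \<sigma> (h \<sigma>)" and "\<sigma> \<in> carrier G"
      by (auto simp: hom_deg_def)
    with add_subgroup_hom_deg[OF assms, where laM = laM and MG = MG]
    show "hom_deg G laM MG laN NG (id \<sigma>) (- h \<sigma>)"
      by (auto simp: add_subgroup_def)
  qed (use S in simp)
  finally show "- f \<in> HOM G laM MG laN NG" .
qed

lemma HOM_additive:
  assumes "f \<in> HOM G laM MG laN NG"
  shows "additive f"
proof
  obtain S h where "\<forall>\<sigma>\<in>S. hom_deg G laM MG laN NG \<sigma> (h \<sigma>)" and "f = sum h S"
    using assms unfolding HOM_iff by blast
  then show "f (x + y) = f x + f y" for x y
    by (simp add: fun_sum_apply hom_deg_def sum.distrib)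
qed

lemma HOM_linear:
  assumes "lmod laN" and "f \<in> HOM G laM MG laN NG"
  shows "f (laM a x) = laN a (f x)"
proof -
  obtain S h where "\<forall>\<sigma>\<in>S. hom_deg G laM MG laN NG \<sigma> (h \<sigma>)" and "f = sum h S"
    using assms(2) unfolding HOM_iff by blast
  then show ?thesis
    by (simp add: fun_sum_apply hom_deg_def additive.sum[OF lmod_additive_right[OF assms(1)]])
qed

lemma Bdot_single: "h \<in> H \<Longrightarrow> (\<lambda>p. h (raP p b)) \<in> Bdot raP H"
  unfolding Bdot_def by (rule CollectI, rule exI[of _ "[(b, h)]"]) auto

lemma Bdot_subset:
  assumes "add_subgroup S" and "\<And>h b. h \<in> H \<Longrightarrow> (\<lambda>p. h (raP p b)) \<in> S"
  shows "Bdot raP H \<subseteq> S"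
proof
  fix f
  assume "f \<in> Bdot raP H"
  then obtain xs where xs: "set (map snd xs) \<subseteq> H" "f = (\<lambda>p. \<Sum>(b, h)\<leftarrow>xs. h (raP p b))"
    unfolding Bdot_def by blast
  then have "f = (\<Sum>(b, h)\<leftarrow>xs. (\<lambda>p. h (raP p b)))"
    by (simp add: fun_eq_iff fun_sum_list_apply case_prod_unfold)
  also have "\<dots> \<in> S"
    by (rule sum_list_map_induct[where P = "\<lambda>f. f \<in> S"])
      (use xs(1) assms in \<open>auto simp: add_subgroup_def\<close>)
  finally show "f \<in> S" .
qed

lemma add_subgroup_Bdot:
  assumes "add_subgroup H"
  shows "add_subgroup (Bdot raP H)"
  unfolding add_subgroup_def
proof (intro conjI ballI)
  show "0 \<in> Bdot raP H"
    unfolding Bdot_def by (rule CollectI, rule exI[of _ "[]"]) auto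
  fix f g
  assume "f \<in> Bdot raP H" "g \<in> Bdot raP H"
  then obtain xs ys where xs: "set (map snd xs) \<subseteq> H" "f = (\<lambda>p. \<Sum>(b, h)\<leftarrow>xs. h (raP p b))"
    and ys: "set (map snd ys) \<subseteq> H" "g = (\<lambda>p. \<Sum>(b, h)\<leftarrow>ys. h (raP p b))"
    unfolding Bdot_def by blast
  show "f + g \<in> Bdot raP H"
    unfolding Bdot_def
    by (rule CollectI, rule exI[of _ "xs @ ys"]) (use xs ys in \<open>auto simp: fun_eq_iff\<close>)
  have "set (map snd (map (\<lambda>(b, h). (b, - h)) xs)) \<subseteq> H"
    using xs(1) assms by (auto simp: add_subgroup_def)
  moreover have "- (\<Sum>(b, h)\<leftarrow>xs. h (raP p b))
      = (\<Sum>(b, h)\<leftarrow>map (\<lambda>(b, h). (b, - h)) xs. h (raP p b))" for p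
    by (induction xs) auto
  then have "- f = (\<lambda>p. \<Sum>(b, h)\<leftarrow>map (\<lambda>(b, h). (b, - h)) xs. h (raP p b))"
    using xs(2) by (simp add: fun_eq_iff)
  ultimately show "- f \<in> Bdot raP H"
    unfolding Bdot_def by blast
qed

lemma Bdot_shift:
  assumes "rmod raP" and "add_subgroup H" and "g \<in> Bdot raP H"
  shows "(\<lambda>p. g (raP p b)) \<in> Bdot raP H"
proof -
  have "additive (\<lambda>g p. g (raP p b))"
    by unfold_locales (simp add: plus_fun_def)
  then have "add_subgroup ((\<lambda>g p. g (raP p b)) -` Bdot raP H)"
    by (rule add_subgroup_vimage[OF _ add_subgroup_Bdot[OF assms(2)]])
  moreover have "(\<lambda>p. h (raP (raP p b) b')) \<in> Bdot raP H" if "h \<in> H" for h b'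
    using Bdot_single[OF that, of raP "b * b'"] assms(1) by (simp add: rmod_def)
  ultimately have "Bdot raP H \<subseteq> (\<lambda>g p. g (raP p b)) -` Bdot raP H"
    by (intro Bdot_subset) auto
  then show ?thesis
    using assms(3) by blast
qed

section \<open>The tensor product and the map eta\<close>

lemma additive_eta: "additive (eta laU)"
proof
  fix x y
  show "eta laU (x + y) = eta laU x + eta laU y"
  proof
    fix p
    show "eta laU (x + y) p = (eta laU x + eta laU y) p"
      using sum_keys_lookup_add[of "\<lambda>k n. zmult n (laU (fst k p) (snd k))" x y]
      by (simp add: eta_def additive_zmult)
  qed
qed

lemma eta_frag_of [simp]: "eta laU (frag_of (g, u)) = (\<lambda>p. laU (g p) u)"
  by (simp add: eta_def)

lemma frag_cmul_frag_of: "frag_cmul n (frag_of a) = Poly_Mapping.single a n"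
  by (rule poly_mapping_eqI) (simp add: lookup_single when_def)

lemma tensor_Bact_eq_frag_extend:
  "tensor_Bact raP b = frag_extend (\<lambda>(g, u). frag_of (\<lambda>p. g (raP p b), u))"
  by (simp add: fun_eq_iff tensor_Bact_def frag_extend_def frag_cmul_frag_of case_prod_unfold)

lemma additive_tensor_Bact: "additive (tensor_Bact raP b)"
  by unfold_locales (simp add: tensor_Bact_eq_frag_extend frag_extend_add)

lemma tensor_Bact_frag_of [simp]:
  "tensor_Bact raP b (frag_of (g, u)) = frag_of (\<lambda>p. g (raP p b), u)"
  by (simp add: tensor_Bact_eq_frag_extend)

lemma keys_tensor_Bact:
  "Poly_Mapping.keys (tensor_Bact raP b x) \<subseteq> (\<lambda>(g, u). (\<lambda>p. g (raP p b), u)) ` Poly_Mapping.keys x"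
  using keys_frag_extend by (fastforce simp: tensor_Bact_eq_frag_extend)

lemma eta_tensor_Bact: "eta laU (tensor_Bact raP b x) = (\<lambda>p. eta laU x (raP p b))"
  using subset_UNIV
proof (induction x rule: frag_induction[where S = UNIV])
  case (diff x y)
  then show ?case
    by (simp add: additive.diff[OF additive_eta] additive.diff[OF additive_tensor_Bact])
qed (auto simp: additive.zero[OF additive_eta] additive.zero[OF additive_tensor_Bact])

lemma add_subgroup_tensor_rel: "add_subgroup (tensor_rel M laU)"
  by (simp add: add_subgroup_def tensor_rel.zero tensor_rel.add tensor_rel.neg)

lemma add_subgroup_tensor_free: "add_subgroup (tensor_free M)"
  unfolding add_subgroup_def tensor_free_def using keys_add by fastforce

lemma eta_tensor_rel:
  assumes "lmod laU" and "x \<in> tensor_rel M laU"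
  shows "eta laU x = 0"
  using assms(2)
proof (induction rule: tensor_rel.induct)
  case (addl g g' u)
  then show ?case
    by (simp add: additive.diff[OF additive_eta] lmod_additive_left[OF assms(1), THEN additive.add]
        fun_eq_iff)
next
  case (addr g u u')
  then show ?case
    by (simp add: additive.diff[OF additive_eta] lmod_additive_right[OF assms(1), THEN additive.add]
        fun_eq_iff)
next
  case (bal g a u)
  then show ?case
    using assms(1) by (simp add: additive.diff[OF additive_eta] lmod_def fun_eq_iff)
qed (simp_all add: additive.zero[OF additive_eta] additive.add[OF additive_eta]
       additive.minus[OF additive_eta])

lemma tensor_Bact_tensor_rel:
  assumes "\<And>g. g \<in> M \<Longrightarrow> (\<lambda>p. g (raP p b)) \<in> M" and "x \<in> tensor_rel M laU"
  shows "tensor_Bact raP b x \<in> tensor_rel M laU"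
  using assms(2)
proof (induction rule: tensor_rel.induct)
  case (addl g g' u)
  then show ?case
    using tensor_rel.addl[OF assms(1) assms(1)]
    by (simp add: additive.diff[OF additive_tensor_Bact])
next
  case (addr g u u')
  then show ?case
    using tensor_rel.addr[OF assms(1)]
    by (simp add: additive.diff[OF additive_tensor_Bact])
next
  case (bal g a u)
  then show ?case
    using tensor_rel.bal[OF assms(1)]
    by (simp add: additive.diff[OF additive_tensor_Bact])
qed (simp_all add: additive.zero[OF additive_tensor_Bact] additive.add[OF additive_tensor_Bact]
       additive.minus[OF additive_tensor_Bact] tensor_rel.intros)

lemma tensor_rel_frag_of_zero: "g \<in> M \<Longrightarrow> frag_of (g, 0) \<in> tensor_rel M laU"
  using tensor_rel.neg[OF tensor_rel.addr[of g M 0 0 laU]] by simp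

section \<open>Graded Morita contexts\<close>

locale graded_morita_module =
  fixes G :: "('g, 'z) monoid_scheme"
    and AG :: "'g \<Rightarrow> 'a::ring set" and BG :: "'g \<Rightarrow> 'b::ring set"
    and PG :: "'g \<Rightarrow> 'p::ab_group_add set" and laP :: "'a \<Rightarrow> 'p \<Rightarrow> 'p" and raP :: "'p \<Rightarrow> 'b \<Rightarrow> 'p"
    and QG :: "'g \<Rightarrow> 'q::ab_group_add set" and laQ :: "'b \<Rightarrow> 'q \<Rightarrow> 'q" and raQ :: "'q \<Rightarrow> 'a \<Rightarrow> 'q"
    and mu :: "'p \<Rightarrow> 'q \<Rightarrow> 'a" and nu :: "'q \<Rightarrow> 'p \<Rightarrow> 'b"
    and UG :: "'g \<Rightarrow> 'u::ab_group_add set" and laU :: "'a \<Rightarrow> 'u \<Rightarrow> 'u"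
  assumes group: "group G"
    and morita: "graded_morita_context G AG BG PG laP raP QG laQ raQ mu nu"
    and nu_surj: "pairing_surj nu"
    and U: "graded_lmod G AG UG laU"
begin

abbreviation "HomA \<equiv> HOM G laP PG (*) AG"
abbreviation "HomU \<equiv> HOM G laP PG laU UG"
abbreviation "M \<equiv> Bdot raP HomA"
abbreviation "N \<equiv> Bdot raP HomU"

lemma lmod_U: "lmod laU"
  using U by (simp add: graded_lmod_def)

lemma graded_group_U: "graded_group G UG"
  using U by (simp add: graded_lmod_def)

lemma U_grading:
  "\<sigma> \<in> carrier G \<Longrightarrow> \<tau> \<in> carrier G \<Longrightarrow> a \<in> AG \<sigma> \<Longrightarrow> u \<in> UG \<tau> \<Longrightarrow>
    laU a u \<in> UG (\<sigma> \<otimes>\<^bsub>G\<^esub> \<tau>)"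
  using U by (simp add: graded_lmod_def)

lemma graded_lmod_A: "graded_lmod G AG AG (*)"
  using morita by (simp add: graded_morita_context_def graded_ring_def graded_lmod_def lmod_times)

lemma graded_rmod_P: "graded_rmod G PG BG raP"
  using morita by (simp add: graded_morita_context_def graded_unital_bimod_def)

lemma raP_laP_commute: "raP (laP a p) b = laP a (raP p b)"
  using morita by (simp add: graded_morita_context_def graded_unital_bimod_def)

lemma raP_additive_left: "additive (\<lambda>p. raP p b)"
  using graded_rmod_P by unfold_locales (simp add: graded_rmod_def rmod_def)

lemma raP_additive_right: "additive (raP p)"
  using graded_rmod_P by unfold_locales (simp add: graded_rmod_def rmod_def)

lemma mu_pairing: "graded_pairing G AG PG QG laP raP laQ raQ mu"
  using morita by (simp add: graded_morita_context_def)

lemma mu_additive_right: "additive (mu p)"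
  using mu_pairing by unfold_locales (simp add: graded_pairing_def)

lemma raP_nu: "raP p' (nu q p) = laP (mu p' q) p"
  using morita by (simp add: graded_morita_context_def)

lemma hom_deg_shift:
  assumes "hom_deg G laP PG laN NG \<sigma> h" and "\<beta> \<in> carrier G" and "b \<in> BG \<beta>"
  shows "hom_deg G laP PG laN NG (\<beta> \<otimes>\<^bsub>G\<^esub> \<sigma>) (\<lambda>p. h (raP p b))"
  unfolding hom_deg_def
proof (intro conjI allI ballI)
  have \<sigma>: "\<sigma> \<in> carrier G"
    using assms(1) by (simp add: hom_deg_def)
  then show "\<beta> \<otimes>\<^bsub>G\<^esub> \<sigma> \<in> carrier G"
    using assms(2) group by (simp add: group.is_monoid monoid.m_closed)
  show "h (raP (x + y) b) = h (raP x b) + h (raP y b)" for x y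
    using assms(1) by (simp add: additive.add[OF raP_additive_left] hom_deg_def)
  show "h (raP (laP a x) b) = laN a (h (raP x b))" for a x
    using assms(1) by (simp add: raP_laP_commute hom_deg_def)
  fix \<tau> p
  assume "\<tau> \<in> carrier G" and "p \<in> PG \<tau>"
  then have "raP p b \<in> PG (\<tau> \<otimes>\<^bsub>G\<^esub> \<beta>)"
    using graded_rmod_P assms(2,3) by (simp add: graded_rmod_def)
  then have "h (raP p b) \<in> NG (\<tau> \<otimes>\<^bsub>G\<^esub> \<beta> \<otimes>\<^bsub>G\<^esub> \<sigma>)"
    using assms(1,2) \<open>\<tau> \<in> carrier G\<close> group
    by (simp add: hom_deg_def group.is_monoid monoid.m_closed)
  then show "h (raP p b) \<in> NG (\<tau> \<otimes>\<^bsub>G\<^esub> (\<beta> \<otimes>\<^bsub>G\<^esub> \<sigma>))"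
    using \<open>\<tau> \<in> carrier G\<close> assms(2) \<sigma> group by (simp add: group.is_monoid monoid.m_assoc)
qed

lemma HOM_shift:
  assumes "graded_lmod G AG NG laN" and "f \<in> HOM G laP PG laN NG"
  shows "(\<lambda>p. f (raP p b)) \<in> HOM G laP PG laN NG"
proof -
  have NG: "graded_group G NG" "lmod laN"
    using assms(1) by (simp_all add: graded_lmod_def)
  have "graded_group G BG"
    using morita by (simp add: graded_morita_context_def graded_ring_def)
  then obtain T c where T: "finite T" "T \<subseteq> carrier G" "\<And>\<beta>. \<beta> \<in> T \<Longrightarrow> c \<beta> \<in> BG \<beta>" "b = sum c T"
    using graded_group_decomposition[where x = b] by blast
  obtain S h where S: "\<forall>\<sigma>\<in>S. hom_deg G laP PG laN NG \<sigma> (h \<sigma>)" "f = sum h S"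
    using assms(2) unfolding HOM_iff by blast
  have h_additive: "additive (h \<sigma>)" if "\<sigma> \<in> S" for \<sigma>
    using S(1) that by (blast intro: hom_deg_additive)
  have "(\<lambda>p. f (raP p b)) = (\<Sum>\<sigma>\<in>S. \<Sum>\<beta>\<in>T. (\<lambda>p. h \<sigma> (raP p (c \<beta>))))"
    unfolding fun_eq_iff fun_sum_apply S(2) T(4) additive.sum[OF raP_additive_right]
    by (auto intro!: sum.cong simp: additive.sum[OF h_additive])
  also have "\<dots> \<in> HOM G laP PG laN NG"
    using S T
    by (intro add_subgroup_sum[OF add_subgroup_HOM[OF group NG]] hom_deg_in_HOM[OF hom_deg_shift])
      auto
  finally show ?thesis .
qed

lemma Bdot_HOM_subset:
  "graded_lmod G AG NG laN \<Longrightarrow> Bdot raP (HOM G laP PG laN NG) \<subseteq> HOM G laP PG laN NG"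
  by (intro Bdot_subset add_subgroup_HOM HOM_shift group) (simp_all add: graded_lmod_def)

lemma M_additive: "g \<in> M \<Longrightarrow> additive g"
  using Bdot_HOM_subset[OF graded_lmod_A] HOM_additive by blast

lemma M_linear: "g \<in> M \<Longrightarrow> g (laP a p) = a * g p"
  using Bdot_HOM_subset[OF graded_lmod_A] HOM_linear[OF lmod_times] by blast

lemma add_subgroup_HomA: "add_subgroup HomA"
  using graded_lmod_A by (intro add_subgroup_HOM group) (simp_all add: graded_lmod_def)

lemma add_subgroup_HomU: "add_subgroup HomU"
  by (intro add_subgroup_HOM group graded_group_U lmod_U)

lemma add_subgroup_M: "add_subgroup M"
  by (rule add_subgroup_Bdot[OF add_subgroup_HomA])

lemma add_subgroup_N: "add_subgroup N"
  by (rule add_subgroup_Bdot[OF add_subgroup_HomU])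

lemma M_shift: "g \<in> M \<Longrightarrow> (\<lambda>p. g (raP p b)) \<in> M"
  using graded_rmod_P add_subgroup_HomA by (intro Bdot_shift) (simp_all add: graded_rmod_def)

lemma mu_HomA: "(\<lambda>p. mu p q) \<in> HomA"
proof -
  have "graded_group G QG"
    using morita by (simp add: graded_morita_context_def graded_unital_bimod_def graded_lmod_def)
  then obtain T c where T: "finite T" "T \<subseteq> carrier G" "\<And>\<tau>. \<tau> \<in> T \<Longrightarrow> c \<tau> \<in> QG \<tau>" "q = sum c T"
    using graded_group_decomposition[where x = q] by blast
  have "hom_deg G laP PG (*) AG \<tau> (\<lambda>p. mu p (c \<tau>))" if "\<tau> \<in> T" for \<tau>
    using mu_pairing T(2,3) that by (auto simp: hom_deg_def graded_pairing_def)
  then have "(\<Sum>\<tau>\<in>T. (\<lambda>p. mu p (c \<tau>))) \<in> HomA"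
    by (intro add_subgroup_sum[OF add_subgroup_HomA] hom_deg_in_HOM)
  moreover have "(\<lambda>p. mu p q) = (\<Sum>\<tau>\<in>T. (\<lambda>p. mu p (c \<tau>)))"
    by (simp add: fun_eq_iff fun_sum_apply T(4) additive.sum[OF mu_additive_right])
  ultimately show ?thesis
    by simp
qed

lemma mu_M: "(\<lambda>p. mu p q) \<in> M"
proof -
  have "lunital laQ"
    using morita by (simp add: graded_morita_context_def graded_unital_bimod_def)
  then show ?thesis
  proof (induction q rule: lunital_induct)
    case zero
    show ?case
      using add_subgroup_zero[OF add_subgroup_M]
      by (simp add: additive.zero[OF mu_additive_right] zero_fun_def)
  next
    case (act b q)
    have "mu p (laQ b q) = mu (raP p b) q" for p
      using mu_pairing by (simp add: graded_pairing_def)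
    then show ?case
      using Bdot_single[OF mu_HomA] by simp
  next
    case (add q q')
    then show ?case
      using add_subgroup_add[OF add_subgroup_M]
      by (simp add: additive.add[OF mu_additive_right] plus_fun_def)
  qed
qed

lemma hom_deg_act:
  assumes "hom_deg G laP PG (*) AG \<sigma> h" and "\<tau> \<in> carrier G" and "u \<in> UG \<tau>"
  shows "hom_deg G laP PG laU UG (\<sigma> \<otimes>\<^bsub>G\<^esub> \<tau>) (\<lambda>p. laU (h p) u)"
  unfolding hom_deg_def
proof (intro conjI allI ballI)
  have \<sigma>: "\<sigma> \<in> carrier G"
    using assms(1) by (simp add: hom_deg_def)
  then show "\<sigma> \<otimes>\<^bsub>G\<^esub> \<tau> \<in> carrier G"
    using assms(2) group by (simp add: group.is_monoid monoid.m_closed)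
  show "laU (h (x + y)) u = laU (h x) u + laU (h y) u" for x y
    using assms(1) by (simp add: hom_deg_def additive.add[OF lmod_additive_left[OF lmod_U]])
  show "laU (h (laP a x)) u = laU a (laU (h x) u)" for a x
    using assms(1) lmod_U by (simp add: hom_deg_def lmod_def)
  fix \<rho> p
  assume "\<rho> \<in> carrier G" and "p \<in> PG \<rho>"
  then have "laU (h p) u \<in> UG (\<rho> \<otimes>\<^bsub>G\<^esub> \<sigma> \<otimes>\<^bsub>G\<^esub> \<tau>)"
    using assms \<sigma> group
    by (intro U_grading) (simp_all add: hom_deg_def group.is_monoid monoid.m_closed)
  then show "laU (h p) u \<in> UG (\<rho> \<otimes>\<^bsub>G\<^esub> (\<sigma> \<otimes>\<^bsub>G\<^esub> \<tau>))"
    using \<open>\<rho> \<in> carrier G\<close> assms(2) \<sigma> group by (simp add: group.is_monoid monoid.m_assoc)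
qed

lemma HomA_act_in_HomU:
  assumes "h \<in> HomA"
  shows "(\<lambda>p. laU (h p) u) \<in> HomU"
proof -
  obtain S k where S: "\<forall>\<sigma>\<in>S. hom_deg G laP PG (*) AG \<sigma> (k \<sigma>)" "h = sum k S"
    using assms unfolding HOM_iff by blast
  obtain T c where T: "finite T" "T \<subseteq> carrier G" "\<And>\<tau>. \<tau> \<in> T \<Longrightarrow> c \<tau> \<in> UG \<tau>" "u = sum c T"
    using graded_group_decomposition[OF graded_group_U, where x = u] by blast
  have "(\<lambda>p. laU (h p) u) = (\<Sum>\<tau>\<in>T. \<Sum>\<sigma>\<in>S. (\<lambda>p. laU (k \<sigma> p) (c \<tau>)))"
    by (simp add: fun_eq_iff fun_sum_apply S(2) T(4) additive.sum[OF lmod_additive_left[OF lmod_U]]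
        additive.sum[OF lmod_additive_right[OF lmod_U]])
  also have "\<dots> \<in> HomU"
    using S T by (intro add_subgroup_sum[OF add_subgroup_HomU] hom_deg_in_HOM[OF hom_deg_act]) auto
  finally show ?thesis .
qed

lemma M_act_in_N:
  assumes "g \<in> M"
  shows "(\<lambda>p. laU (g p) u) \<in> N"
proof -
  have "additive (\<lambda>g p. laU (g p) u)"
    by unfold_locales (simp add: fun_eq_iff additive.add[OF lmod_additive_left[OF lmod_U]])
  then have "add_subgroup ((\<lambda>g p. laU (g p) u) -` N)"
    by (rule add_subgroup_vimage[OF _ add_subgroup_N])
  moreover have "(\<lambda>p. laU (h (raP p b)) u) \<in> N" if "h \<in> HomA" for h b
    by (rule Bdot_single[OF HomA_act_in_HomU[OF that]])
  ultimately have "M \<subseteq> (\<lambda>g p. laU (g p) u) -` N"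
    by (intro Bdot_subset) auto
  then show ?thesis
    using assms by blast
qed

lemma eta_tensor_free_in_N:
  assumes "x \<in> tensor_free M"
  shows "eta laU x \<in> N"
proof -
  have "x \<in> eta laU -` N"
  proof (rule frag_induction_add_subgroup)
    show "Poly_Mapping.keys x \<subseteq> M \<times> UNIV"
      using assms by (simp add: tensor_free_def)
    show "add_subgroup (eta laU -` N)"
      by (rule add_subgroup_vimage[OF additive_eta add_subgroup_N])
    fix k
    assume "k \<in> M \<times> (UNIV :: 'u set)"
    then show "frag_of k \<in> eta laU -` N"
      using M_act_in_N by auto
  qed
  then show ?thesis
    by simp
qed

lemma N_subset_eta_image: "N \<subseteq> eta laU ` tensor_free M"
proof (rule Bdot_subset)
  let ?E = "eta laU ` tensor_free M"
  show E: "add_subgroup ?E"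
    by (rule add_subgroup_image[OF additive_eta add_subgroup_tensor_free])
  fix h b
  assume h: "h \<in> HomU"
  show "(\<lambda>p. h (raP p b)) \<in> ?E"
    using nu_surj
  proof (induction b rule: pairing_surj_induct)
    case zero
    have "(\<lambda>p. h (raP p 0)) = 0"
      by (simp add: fun_eq_iff additive.zero[OF raP_additive_right]
          additive.zero[OF HOM_additive[OF h]])
    then show ?case
      using add_subgroup_zero[OF E] by simp
  next
    case (pair q p')
    have "frag_of (\<lambda>p. mu p q, h p') \<in> tensor_free M"
      using mu_M by (simp add: tensor_free_def)
    then have "eta laU (frag_of (\<lambda>p. mu p q, h p')) \<in> ?E"
      by (rule imageI)
    then show ?case
      by (simp add: fun_eq_iff raP_nu HOM_linear[OF lmod_U h])
  next
    case (add b b')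
    have "(\<lambda>p. h (raP p (b + b'))) = (\<lambda>p. h (raP p b)) + (\<lambda>p. h (raP p b'))"
      by (simp add: fun_eq_iff additive.add[OF raP_additive_right]
          additive.add[OF HOM_additive[OF h]])
    then show ?case
      using add_subgroup_add[OF E add.IH] by simp
  qed
qed

lemma eta_image: "eta laU ` tensor_free M = N"
  using eta_tensor_free_in_N N_subset_eta_image by blast

lemma hom_deg_eta:
  assumes "\<rho> \<in> carrier G"
    and "\<forall>k\<in>Poly_Mapping.keys x. \<exists>\<sigma>\<in>carrier G. \<exists>\<tau>\<in>carrier G. \<sigma> \<otimes>\<^bsub>G\<^esub> \<tau> = \<rho> \<and>
           hom_deg G laP PG (*) AG \<sigma> (fst k) \<and> snd k \<in> UG \<tau>"
  shows "hom_deg G laP PG laU UG \<rho> (eta laU x)"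
proof -
  have "x \<in> eta laU -` {f. hom_deg G laP PG laU UG \<rho> f}"
  proof (rule frag_induction_add_subgroup)
    show "Poly_Mapping.keys x \<subseteq> {k. \<exists>\<sigma>\<in>carrier G. \<exists>\<tau>\<in>carrier G. \<sigma> \<otimes>\<^bsub>G\<^esub> \<tau> = \<rho> \<and>
           hom_deg G laP PG (*) AG \<sigma> (fst k) \<and> snd k \<in> UG \<tau>}"
      using assms(2) by blast
    show "add_subgroup (eta laU -` {f. hom_deg G laP PG laU UG \<rho> f})"
      by (intro add_subgroup_vimage additive_eta add_subgroup_hom_deg group graded_group_U lmod_U
          assms(1))
  qed (auto intro: hom_deg_act)
  then show ?thesis
    by simp
qed

lemma tensor_Bact_tensor_free:
  assumes "x \<in> tensor_free M"
  shows "tensor_Bact raP b x \<in> tensor_free M"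
proof -
  have "Poly_Mapping.keys (tensor_Bact raP b x)
      \<subseteq> (\<lambda>(g, u). (\<lambda>p. g (raP p b), u)) ` Poly_Mapping.keys x"
    by (rule keys_tensor_Bact)
  also have "\<dots> \<subseteq> M \<times> UNIV"
    using assms M_shift by (auto simp: tensor_free_def)
  finally show ?thesis
    by (simp add: tensor_free_def)
qed

lemma tensor_Bact_add_mod_rel:
  assumes "x \<in> tensor_free M"
  shows "tensor_Bact raP (b + b') x - tensor_Bact raP b x - tensor_Bact raP b' x \<in> tensor_rel M laU"
proof -
  let ?D = "\<lambda>x. tensor_Bact raP (b + b') x - tensor_Bact raP b x - tensor_Bact raP b' x"
  have "additive ?D"
    by unfold_locales (simp add: additive.add[OF additive_tensor_Bact] algebra_simps)
  have "x \<in> ?D -` tensor_rel M laU"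
  proof (rule frag_induction_add_subgroup)
    show "Poly_Mapping.keys x \<subseteq> M \<times> UNIV"
      using assms by (simp add: tensor_free_def)
    show "add_subgroup (?D -` tensor_rel M laU)"
      by (rule add_subgroup_vimage[OF \<open>additive ?D\<close> add_subgroup_tensor_rel])
    fix k
    assume "k \<in> M \<times> (UNIV :: 'u set)"
    then obtain g u where k: "k = (g, u)" "g \<in> M"
      by blast
    have "(\<lambda>p. g (raP p (b + b'))) = (\<lambda>p. g (raP p b) + g (raP p b'))"
      by (simp add: additive.add[OF raP_additive_right] additive.add[OF M_additive[OF k(2)]])
    then show "frag_of k \<in> ?D -` tensor_rel M laU"
      using tensor_rel.addl[OF M_shift[OF k(2)] M_shift[OF k(2)]] by (simp add: k)
  qed
  then show ?thesis
    by simp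
qed

text \<open>On a generator, \<open>[q,p'] (g \<otimes> u) = (\<lambda>p. \<langle>p,q\<rangle> g p') \<otimes> u\<close>, which by the balancing
  relation is \<open>\<langle>-,q\<rangle> \<otimes> g(p') u\<close>.\<close>

lemma tensor_Bact_nu_mod_rel:
  assumes "x \<in> tensor_free M"
  shows "tensor_Bact raP (nu q p') x - frag_of (\<lambda>p. mu p q, eta laU x p') \<in> tensor_rel M laU"
proof -
  let ?T = "\<lambda>v. frag_of (\<lambda>p. mu p q, v)"
  have "Poly_Mapping.keys x \<subseteq> M \<times> UNIV"
    using assms by (simp add: tensor_free_def)
  then show ?thesis
  proof (induction x rule: frag_induction)
    case zero
    show ?case
      using tensor_rel.neg[OF tensor_rel_frag_of_zero[OF mu_M]]
      by (simp add: additive.zero[OF additive_tensor_Bact] additive.zero[OF additive_eta])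
  next
    case (one k)
    then obtain g u where k: "k = (g, u)" "g \<in> M"
      by blast
    have "(\<lambda>p. g (raP p (nu q p'))) = (\<lambda>p. mu p q * g p')"
      by (simp add: raP_nu M_linear[OF k(2)])
    then show ?case
      using tensor_rel.bal[OF mu_M, of q "g p'" u] by (simp add: k)
  next
    case (diff x y)
    let ?v = "eta laU x p'" and ?w = "eta laU y p'"
    have "?T ?v - ?T (?v - ?w) - ?T ?w \<in> tensor_rel M laU"
      using tensor_rel.addr[OF mu_M, of q "?v - ?w" ?w laU] by simp
    with add_subgroup_diff[OF add_subgroup_tensor_rel diff.IH]
    have "(tensor_Bact raP (nu q p') x - ?T ?v) - (tensor_Bact raP (nu q p') y - ?T ?w)
        + (?T ?v - ?T (?v - ?w) - ?T ?w) \<in> tensor_rel M laU"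
      by (rule add_subgroup_add[OF add_subgroup_tensor_rel])
    then show ?case
      by (simp add: additive.diff[OF additive_tensor_Bact] additive.diff[OF additive_eta]
          algebra_simps)
  qed
qed

lemma ker_eta_torsion:
  assumes "x \<in> tensor_free M" and "eta laU x = 0"
  shows "tensor_Bact raP b x \<in> tensor_rel M laU"
  using nu_surj
proof (induction b rule: pairing_surj_induct)
  case zero
  have "- tensor_Bact raP 0 x \<in> tensor_rel M laU"
    using tensor_Bact_add_mod_rel[OF assms(1), of 0 0] by simp
  then show ?case
    using tensor_rel.neg by force
next
  case (pair q p')
  have "(tensor_Bact raP (nu q p') x - frag_of (\<lambda>p. mu p q, 0)) + frag_of (\<lambda>p. mu p q, 0)
      \<in> tensor_rel M laU"
    using tensor_Bact_nu_mod_rel[OF assms(1), of q p'] assms(2)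
    by (intro tensor_rel.add tensor_rel_frag_of_zero mu_M) simp_all
  then show ?case
    by simp
next
  case (add b b')
  have "(tensor_Bact raP (b + b') x - tensor_Bact raP b x - tensor_Bact raP b' x)
      + tensor_Bact raP b x + tensor_Bact raP b' x \<in> tensor_rel M laU"
    using tensor_Bact_add_mod_rel[OF assms(1)] add.IH by (intro tensor_rel.add)
  then show ?case
    by simp
qed

end

theorem lemma5p4:
  fixes G :: "('g, 'z) monoid_scheme"
    and AG :: "'g \<Rightarrow> 'a::ring set" and BG :: "'g \<Rightarrow> 'b::ring set"
    and PG :: "'g \<Rightarrow> 'p::ab_group_add set" and laP :: "'a \<Rightarrow> 'p \<Rightarrow> 'p" and raP :: "'p \<Rightarrow> 'b \<Rightarrow> 'p"
    and QG :: "'g \<Rightarrow> 'q::ab_group_add set" and laQ :: "'b \<Rightarrow> 'q \<Rightarrow> 'q" and raQ :: "'q \<Rightarrow> 'a \<Rightarrow> 'q"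
    and mu :: "'p \<Rightarrow> 'q \<Rightarrow> 'a" and nu :: "'q \<Rightarrow> 'p \<Rightarrow> 'b"
    and UG :: "'g \<Rightarrow> 'u::ab_group_add set" and laU :: "'a \<Rightarrow> 'u \<Rightarrow> 'u"
  assumes "group G"
    and "graded_morita_context G AG BG PG laP raP QG laQ raQ mu nu"
    and "pairing_surj mu" and "pairing_surj nu"
    and "graded_lmod G AG UG laU" and "lunital laU"
  defines "M \<equiv> Bdot raP (HOM G laP PG (*) AG)"
    and "N \<equiv> Bdot raP (HOM G laP PG laU UG)"
  shows "(\<forall>x\<in>tensor_rel M laU. eta laU x = (\<lambda>p. 0))
    \<and> (\<forall>x\<in>tensor_free M. \<forall>y\<in>tensor_free M. eta laU (x + y) = (\<lambda>p. eta laU x p + eta laU y p))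
    \<and> (\<forall>b x::(('p \<Rightarrow> 'a) \<times> 'u) \<Rightarrow>\<^sub>0 int. x \<in> tensor_free M \<longrightarrow> tensor_Bact raP b x \<in> tensor_free M)
    \<and> (\<forall>b. \<forall>x\<in>tensor_rel M laU. tensor_Bact raP b x \<in> tensor_rel M laU)
    \<and> (\<forall>b. \<forall>x\<in>tensor_free M. eta laU (tensor_Bact raP b x) = (\<lambda>p. eta laU x (raP p b)))
    \<and> eta laU ` tensor_free M = N
    \<and> (\<forall>\<rho>\<in>carrier G. \<forall>x\<in>tensor_free M.
         (\<forall>k\<in>Poly_Mapping.keys x. \<exists>\<sigma>\<in>carrier G. \<exists>\<tau>\<in>carrier G. \<sigma> \<otimes>\<^bsub>G\<^esub> \<tau> = \<rho> \<and>
              hom_deg G laP PG (*) AG \<sigma> (fst k) \<and> snd k \<in> UG \<tau>)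
         \<longrightarrow> hom_deg G laP PG laU UG \<rho> (eta laU x))
    \<and> (\<forall>x\<in>tensor_free M. eta laU x = (\<lambda>p. 0) \<longrightarrow> (\<forall>b. tensor_Bact raP b x \<in> tensor_rel M laU))"
proof -
  interpret graded_morita_module G AG BG PG laP raP QG laQ raQ mu nu UG laU
    using assms(1,2,4,5) by (simp add: graded_morita_module_def)
  show ?thesis
    unfolding M_def N_def
    apply (intro conjI)
    subgoal using eta_tensor_rel[OF lmod_U] by (auto simp: zero_fun_def)
    subgoal by (simp add: additive.add[OF additive_eta] plus_fun_def)
    subgoal using tensor_Bact_tensor_free by blast
    subgoal by (blast intro: tensor_Bact_tensor_rel M_shift)
    subgoal by (simp add: eta_tensor_Bact)
    subgoal by (rule eta_image)
    subgoal using hom_deg_eta by blast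
    subgoal using ker_eta_torsion by (simp add: zero_fun_def)
    done
qed

end
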